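(* Let $\lambda_1\in\mathbb{R}$ with $0<|\lambda_1|<1$ and $h\in\mathbb{R}_{>0}$. Consider the system $x[k+1]=Ax[k]+w[k]$ with $A=\mathrm{diag}(\lambda_1,0,0)$, $W=I_{3\times3}$, and three candidate sensors with scalar measurements $y_i[k]=C_ix[k]+v_i[k]$, where $C_1=[1\ h\ h]$, $C_2=[1\ 0\ h]$, $C_3=[0\ 1\ 1]$, and measurement noise covariance $V=\mathbf{0}_{3\times3}$. Each sensor has cost $1$ and the budget is $2$. Let $\Sigma_{opt}=\Sigma(\mu^* )$ where $\mu^*$ minimizes $\mathrm{trace}(\Sigma(\mu))$ over all $\mu\in\{0,1\}^3$ with $\mu_1+\mu_2+\mu_3\le 2$, and let $\Sigma_{gre}$ be $\Sigma(\mu)$ for the selection produced by the greedy algorithm with budget $p_s=2$. Then $r_{gre}(\Sigma)=\mathrm{trace}(\Sigma_{gre})/\mathrm{trace}(\Sigma_{opt})$ satisfies $$\lim_{h\to\infty} r_{gre}(\Sigma)=\frac{2}{3}+\frac{1}{3(1-\lambda_1^2)}.$$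
   Context: For a selection $\mu\in\{0,1\}^3$, $C(\mu)$ stacks the rows $C_i$ with $\mu_i=1$, and $V(\mu)=\mathbf{0}$. Since $A$ is stable, $\Sigma(\mu)$ is the limit as $k\to\infty$ of the a priori error covariance $\Sigma_{k|k-1}(\mu)$ of the Kalman filter using the selected sensors; it satisfies $\Sigma(\mu)=A\Sigma(\mu)A^T+W-A\Sigma(\mu)C(\mu)^T(C(\mu)\Sigma(\mu)C(\mu)^T)^{-1}C(\mu)\Sigma(\mu)A^T$, with the inverse interpreted as a pseudo-inverse when singular. The greedy algorithm with budget $p_s$ starts with $\mathcal{S}=\emptyset$ and, for $p_s$ iterations, adds to $\mathcal{S}$ a sensor $j\notin\mathcal{S}$ minimizing $\mathrm{trace}(\Sigma(\mathcal{S}\cup\{j\}))$, where $\Sigma(\mathcal{S})$ denotes $\Sigma(\mu)$ for the indicator vector $\mu$ of $\mathcal{S}$. *)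

theory Defs
  imports "HOL-Analysis.Analysis"
begin

definition pinv :: "real^'n^'n \<Rightarrow> real^'n^'n" where
  "pinv M = (THE X. M ** X ** M = M \<and> X ** M ** X = X \<and>
                    transpose (M ** X) = M ** X \<and> transpose (X ** M) = X ** M)"

definition psd :: "real^'n^'n \<Rightarrow> bool" where
  "psd P \<longleftrightarrow> transpose P = P \<and> (\<forall>x. 0 \<le> x \<bullet> (P *v x))"

(* one step of the a priori covariance recursion of the Kalman filter with V = 0:
   Sigma_{k+1|k} = A S A^T + W - A S C^T (C S C^T)^+ C S A^T *)
definition riccati :: "real^'n^'n \<Rightarrow> real^'n^'n \<Rightarrow> real^'n^'m \<Rightarrow> real^'n^'n \<Rightarrow> real^'n^'n" where
  "riccati A W C S = A ** S ** transpose A + W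
     - A ** S ** transpose C ** pinv (C ** S ** transpose C) ** C ** S ** transpose A"

fun kf_cov :: "real^'n^'n \<Rightarrow> real^'n^'n \<Rightarrow> real^'n^'m \<Rightarrow> real^'n^'n \<Rightarrow> nat \<Rightarrow> real^'n^'n" where
  "kf_cov A W C P0 0 = P0"
| "kf_cov A W C P0 (Suc k) = riccati A W C (kf_cov A W C P0 k)"

definition kf_lim :: "real^'n^'n \<Rightarrow> real^'n^'n \<Rightarrow> real^'n^'m \<Rightarrow> real^'n^'n" where
  "kf_lim A W C = (THE L. \<forall>P0. psd P0 \<longrightarrow> (kf_cov A W C P0 \<longlonglongrightarrow> L))"

definition Aex :: "real \<Rightarrow> real^3^3" where
  "Aex l1 = (\<chi> i j. if i = 1 \<and> j = 1 then l1 else 0)"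

definition Cfull :: "real \<Rightarrow> real^3^3" where
  "Cfull h = vector [vector [1, h, h], vector [1, 0, h], vector [0, 1, 1]]"

(* C(mu) for the selection S (the set of sensors i with mu_i = 1), represented as a
   3x3 matrix whose unselected rows are zero *)
definition Csel :: "real \<Rightarrow> 3 set \<Rightarrow> real^3^3" where
  "Csel h S = (\<chi> i j. if i \<in> S then Cfull h $ i $ j else 0)"

definition Sig :: "real \<Rightarrow> real \<Rightarrow> 3 set \<Rightarrow> real^3^3" where
  "Sig l1 h S = kf_lim (Aex l1) (mat 1) (Csel h S)"

(* possible outputs of the greedy algorithm (any tie-breaking) after n iterations,
   for a cost function f on sensor sets *)
inductive greedy_res :: "(3 set \<Rightarrow> real) \<Rightarrow> nat \<Rightarrow> 3 set \<Rightarrow> bool" for f where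
  "greedy_res f 0 {}"
| "greedy_res f n S \<Longrightarrow> j \<notin> S \<Longrightarrow> (\<forall>j'. j' \<notin> S \<longrightarrow> f (insert j S) \<le> f (insert j' S))
     \<Longrightarrow> greedy_res f (Suc n) (insert j S)"

end

(*
  Since A = diag(l,0,0) and W = I, one step of the Riccati recursion maps every covariance P to
  diag(1 + l^2 p, 1, 1), where p is the (1,1) entry of the posterior covariance of P given the
  selected sensors. For P = diag(d,1,1) and every sensor set of size at most two, p has the form
  c d / (a d + c): with k = h^2 it is k d/(d + k) for {2} and {1,2}, 2k d/(d + 2k) for {1},
  k d/(2d + k) for {2,3}, d for {} and {3}, and 0 for {1,3}, which determines x1 exactly.
  The scalar map d -> 1 + l^2 c d/(a d + c) is an l^2-contraction of [1, oo), so Sigma(S) is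
  diag(s,1,1) with s its fixed point. Comparing fixed points, the greedy algorithm picks sensor 2
  and then sensor 3, whereas the optimal trace is 3, attained by {1,3}; and the fixed point for
  {2,3} tends to 1/(1 - l^2) as k -> oo.
*)

theory Submission
  imports Defs
begin

lemma matrix_add_rdistrib: "((A::real^'n^'m) + B) ** C = A ** C + B ** C"
  by (simp add: matrix_matrix_mult_def vec_eq_iff sum.distrib distrib_right)

lemma matrix_diff_rdistrib: "((A::real^'n^'m) - B) ** C = A ** C - B ** C"
  by (simp add: matrix_matrix_mult_def vec_eq_iff sum_subtractf left_diff_distrib)

lemma matrix_diff_ldistrib: "(A::real^'n^'m) ** (B - C) = A ** B - A ** C"
  by (simp add: matrix_matrix_mult_def vec_eq_iff sum_subtractf right_diff_distrib)

lemma matrix_scaleR_left: "(k *\<^sub>R (A::real^'n^'m)) ** B = k *\<^sub>R (A ** B)"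
  by (simp add: scalar_matrix_assoc)

lemma matrix_scaleR_right: "(A::real^'n^'m) ** (k *\<^sub>R B) = k *\<^sub>R (A ** B)"
  by (simp add: matrix_scalar_ac scalar_matrix_assoc)

lemma transpose_diff: "transpose ((A::real^'n^'m) - B) = transpose A - transpose B"
  by (simp add: transpose_def vec_eq_iff)

lemmas matrix_ring_simps = matrix_add_ldistrib matrix_add_rdistrib matrix_diff_ldistrib
  matrix_diff_rdistrib matrix_scaleR_left matrix_scaleR_right

lemma symmetric_square_eq_0:
  fixes N :: "real^'n^'n"
  assumes "transpose N = N" "N ** N = 0"
  shows "N = 0"
proof -
  have sym: "N $ k $ i = N $ i $ k" for i k
    using assms(1) by (metis transpose_def vec_lambda_beta)
  have "N $ i $ k = 0" for i k
  proof -
    have "(N ** N) $ i $ i = (\<Sum>k\<in>UNIV. (N $ i $ k)\<^sup>2)"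
      by (simp add: matrix_matrix_mult_def power2_eq_square sym)
    then have "\<forall>k\<in>UNIV. (N $ i $ k)\<^sup>2 = 0"
      using assms(2) by (subst sum_nonneg_eq_0_iff[symmetric]) auto
    then show ?thesis by simp
  qed
  then show ?thesis by (simp add: vec_eq_iff)
qed

definition penrose :: "real^'n^'n \<Rightarrow> real^'n^'n \<Rightarrow> bool" where
  "penrose M X \<longleftrightarrow> M ** X ** M = M \<and> X ** M ** X = X \<and>
                    transpose (M ** X) = M ** X \<and> transpose (X ** M) = X ** M"

lemma penrose_unique:
  assumes "penrose M X" "penrose M Y"
  shows "X = Y"
proof -
  have X1: "M ** X ** M = M" and X2: "X ** M ** X = X"
    and X3: "transpose (M ** X) = M ** X" and X4: "transpose (X ** M) = X ** M"
    and Y1: "M ** Y ** M = M" and Y2: "Y ** M ** Y = Y"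
    and Y3: "transpose (M ** Y) = M ** Y" and Y4: "transpose (Y ** M) = Y ** M"
    using assms unfolding penrose_def by auto
  have "X = X ** transpose (M ** X)"
    using X2 X3 by (simp add: matrix_mul_assoc)
  also have "\<dots> = X ** transpose (M ** Y ** M ** X)"
    using Y1 by simp
  also have "\<dots> = X ** M ** Y"
    using X2 X3 Y3 by (simp add: matrix_transpose_mul matrix_mul_assoc)
  finally have X_eq: "X = X ** M ** Y" .
  have "Y = transpose (Y ** M) ** Y"
    using Y2 Y4 by simp
  also have "\<dots> = transpose (Y ** (M ** X ** M)) ** Y"
    using X1 by simp
  also have "\<dots> = X ** M ** (Y ** M ** Y)"
    using X4 Y4 by (simp add: matrix_transpose_mul matrix_mul_assoc)
  finally show ?thesis using X_eq Y2 by simp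
qed

lemma pinv_eqI: "penrose M X \<Longrightarrow> pinv M = X"
  unfolding pinv_def
  by (rule the_equality) (auto simp: penrose_def[symmetric] intro: penrose_unique)

lemma penrose_transpose:
  assumes "transpose M = M" "penrose M X"
  shows "penrose M (transpose X)"
proof -
  have "transpose (M ** transpose X) = M ** transpose X"
    using assms by (metis penrose_def matrix_transpose_mul)
  moreover have "transpose (transpose X ** M) = transpose X ** M"
    using assms by (metis penrose_def matrix_transpose_mul)
  moreover have "M ** transpose X ** M = M" "transpose X ** M ** transpose X = transpose X"
    using assms unfolding penrose_def by (metis matrix_transpose_mul matrix_mul_assoc)+
  ultimately show ?thesis unfolding penrose_def by blast
qed

lemma penrose_symmetric:
  assumes "transpose M = M" "penrose M X"
  shows "transpose X = X"
  using penrose_unique[OF penrose_transpose[OF assms] assms(2)] .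

lemma penrose_by_projection:
  assumes "M ** X = P" "X ** M = P" "transpose P = P" "P ** M = M" "P ** X = X"
  shows "penrose M X"
  using assms unfolding penrose_def by (simp flip: matrix_mul_assoc)

lemma cayley_hamilton_3:
  fixes M :: "real^3^3"
  defines "t \<equiv> M$1$1 + M$2$2 + M$3$3"
    and "s \<equiv> M$1$1*M$2$2 - M$1$2*M$2$1 + M$1$1*M$3$3 - M$1$3*M$3$1 + M$2$2*M$3$3 - M$2$3*M$3$2"
  shows "M ** M ** M = t *\<^sub>R (M ** M) - s *\<^sub>R M + det M *\<^sub>R mat 1"
  unfolding t_def s_def det_3
  by (simp add: vec_eq_iff forall_3 matrix_matrix_mult_def sum_3 mat_def) algebra

lemma penrose_cubic_invertible:
  fixes M :: "real^'n^'n"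
  assumes cubic: "M ** M ** M = t *\<^sub>R (M ** M) - s *\<^sub>R M + d *\<^sub>R mat 1" and "d \<noteq> 0"
  shows "penrose M ((1/d) *\<^sub>R (M ** M - t *\<^sub>R M + s *\<^sub>R mat 1))"
proof (rule penrose_by_projection)
  have cubic': "M ** (M ** M) = t *\<^sub>R (M ** M) - s *\<^sub>R M + d *\<^sub>R mat 1"
    using cubic by (simp add: matrix_mul_assoc)
  show "M ** ((1/d) *\<^sub>R (M ** M - t *\<^sub>R M + s *\<^sub>R mat 1)) = mat 1"
    "(1/d) *\<^sub>R (M ** M - t *\<^sub>R M + s *\<^sub>R mat 1) ** M = mat 1"
    using \<open>d \<noteq> 0\<close> by (simp_all add: matrix_ring_simps cubic cubic' algebra_simps)
qed simp_all

lemma penrose_cubic_singular: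
  fixes M :: "real^'n^'n"
  assumes sym: "transpose M = M" and cubic: "M ** M ** M = t *\<^sub>R (M ** M) - s *\<^sub>R M" and "s \<noteq> 0"
  defines "P \<equiv> (1/s) *\<^sub>R (t *\<^sub>R M - M ** M)"
  shows "penrose M ((1/s) *\<^sub>R (t *\<^sub>R P - M))"
proof -
  have cubic': "M ** (M ** M) = t *\<^sub>R (M ** M) - s *\<^sub>R M"
    using cubic by (simp add: matrix_mul_assoc)
  have MP: "M ** P = M" and PM: "P ** M = M"
    unfolding P_def using \<open>s \<noteq> 0\<close> by (simp_all add: matrix_ring_simps cubic cubic' algebra_simps)
  have MMP: "M ** M ** P = M ** M"
    by (simp add: MP flip: matrix_mul_assoc)
  have "P ** P = ((1/s) *\<^sub>R (t *\<^sub>R M - M ** M)) ** P"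
    by (simp only: P_def)
  also have "\<dots> = P"
    by (simp only: matrix_ring_simps MP MMP) (simp add: P_def)
  finally have PP: "P ** P = P" .
  show ?thesis
  proof (rule penrose_by_projection)
    show "M ** ((1/s) *\<^sub>R (t *\<^sub>R P - M)) = P" "(1/s) *\<^sub>R (t *\<^sub>R P - M) ** M = P"
      by (simp_all only: matrix_ring_simps MP PM) (simp_all add: P_def)
    show "transpose P = P"
      unfolding P_def by (simp add: transpose_scalar transpose_diff matrix_transpose_mul sym)
    show "P ** M = M" by (fact PM)
    show "P ** ((1/s) *\<^sub>R (t *\<^sub>R P - M)) = (1/s) *\<^sub>R (t *\<^sub>R P - M)"
      by (simp add: matrix_ring_simps PP PM)
  qed
qed

lemma penrose_cubic_quadratic:
  fixes M :: "real^'n^'n"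
  assumes sym: "transpose M = M" and cubic: "M ** M ** M = t *\<^sub>R (M ** M)" and "t \<noteq> 0"
  shows "penrose M ((1/t\<^sup>2) *\<^sub>R M)"
proof -
  define N where "N = M ** M - t *\<^sub>R M"
  have NM: "N ** M = 0"
    unfolding N_def using cubic by (simp add: matrix_ring_simps)
  have "N ** N = N ** M ** M - t *\<^sub>R (N ** M)"
    by (simp add: N_def matrix_ring_simps matrix_mul_assoc)
  also have "\<dots> = 0"
    by (simp add: NM)
  finally have "N = 0"
    by (rule symmetric_square_eq_0[rotated])
      (simp add: N_def transpose_diff transpose_scalar matrix_transpose_mul sym)
  then have MM: "M ** M = t *\<^sub>R M"
    unfolding N_def by simp
  show ?thesis
    by (rule penrose_by_projection[where P = "(1/t) *\<^sub>R M"])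
      (use \<open>t \<noteq> 0\<close> in \<open>simp_all add: matrix_ring_simps MM transpose_scalar sym power2_eq_square\<close>)
qed

(* The pseudo-inverse is a polynomial in M, chosen according to the lowest nonvanishing
   coefficient of the cubic. *)
lemma penrose_exists_cubic:
  fixes M :: "real^'n^'n"
  assumes sym: "transpose M = M" and cubic: "M ** M ** M = t *\<^sub>R (M ** M) - s *\<^sub>R M + d *\<^sub>R mat 1"
  shows "\<exists>X. penrose M X"
proof -
  consider "d \<noteq> 0" | "d = 0" "s \<noteq> 0" | "d = 0" "s = 0" "t \<noteq> 0" | "d = 0" "s = 0" "t = 0"
    by blast
  then show ?thesis
  proof cases
    case 1
    then show ?thesis using penrose_cubic_invertible[OF cubic] by blast
  next
    case 2
    then show ?thesis using penrose_cubic_singular[OF sym] cubic by auto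
  next
    case 3
    then show ?thesis using penrose_cubic_quadratic[OF sym] cubic by auto
  next
    case 4
    have "M ** M ** (M ** M) = 0"
      using cubic 4 by (simp add: matrix_mul_assoc)
    then have "M ** M = 0"
      by (rule symmetric_square_eq_0[rotated]) (simp add: matrix_transpose_mul sym)
    then have "M = 0"
      using sym symmetric_square_eq_0 by blast
    then have "penrose M 0"
      by (simp add: penrose_def transpose_def vec_eq_iff)
    then show ?thesis ..
  qed
qed

lemma psd_congruence:
  fixes B :: "real^'n^'m"
  assumes "psd P"
  shows "psd (B ** P ** transpose B)"
proof -
  have "x \<bullet> ((B ** P ** transpose B) *v x) = (transpose B *v x) \<bullet> (P *v (transpose B *v x))" for x
    by (simp add: dot_lmul_matrix matrix_vector_mul_assoc[symmetric])
  then show ?thesis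
    using assms unfolding psd_def by (simp add: matrix_transpose_mul matrix_mul_assoc)
qed

lemma psd_0: "psd (0::real^'n^'n)"
  by (simp add: psd_def transpose_def vec_eq_iff)

lemma psd_diag_nonneg:
  assumes "psd P"
  shows "0 \<le> P $ i $ i"
proof -
  have "axis i 1 \<bullet> (P *v axis i 1) = (P *v axis i 1) $ i"
    by (simp only: inner_axis') simp
  also have "\<dots> = P $ i $ i"
    by (simp add: matrix_vector_mult_def axis_def if_distrib cong: if_cong)
  finally have "axis i 1 \<bullet> (P *v axis i 1) = P $ i $ i" .
  then show ?thesis
    using assms unfolding psd_def by metis
qed

definition posterior :: "real^'n^'m \<Rightarrow> real^'n^'n \<Rightarrow> real^'n^'n" where
  "posterior C P = P - P ** transpose C ** pinv (C ** P ** transpose C) ** C ** P"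

lemma riccati_eq_posterior: "riccati A W C P = A ** posterior C P ** transpose A + W"
  unfolding riccati_def posterior_def by (simp add: matrix_ring_simps matrix_mul_assoc)

lemma posterior_eq:
  "penrose (C ** P ** transpose C) X \<Longrightarrow> posterior C P = P - P ** transpose C ** X ** C ** P"
  unfolding posterior_def by (simp add: pinv_eqI)

lemma psd_posterior_penrose:
  fixes C :: "real^'n^'m"
  assumes P: "psd P" and X: "penrose (C ** P ** transpose C) X"
  shows "psd (P - P ** transpose C ** X ** C ** P)"
proof -
  have sym_P: "transpose P = P"
    using P by (simp add: psd_def)
  have sym_X: "transpose X = X"
    using X by (rule penrose_symmetric[rotated]) (simp add: matrix_transpose_mul sym_P matrix_mul_assoc)
  define K where "K = P ** transpose C ** X ** C"
  have KP: "K ** P = P ** transpose K"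
    unfolding K_def by (simp add: matrix_transpose_mul sym_P sym_X matrix_mul_assoc)
  have "K ** P ** transpose K = P ** transpose C ** (X ** (C ** P ** transpose C) ** X) ** C ** P"
    unfolding K_def by (simp add: matrix_transpose_mul sym_P sym_X matrix_mul_assoc)
  also have "\<dots> = K ** P"
    using X unfolding K_def penrose_def by (simp add: matrix_mul_assoc)
  \<comment> \<open>Joseph form of the covariance update\<close>
  finally have "(mat 1 - K) ** P ** transpose (mat 1 - K) = P - K ** P"
    by (simp add: matrix_ring_simps transpose_diff KP)
  then show ?thesis
    using psd_congruence[OF P, of "mat 1 - K"] unfolding K_def by (simp add: matrix_mul_assoc)
qed

(* pinv is a definite description, so the posterior needs the existence of a Moore-Penrose
   inverse, obtained here from Cayley-Hamilton for three measurements. *)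
lemma psd_posterior:
  fixes C :: "real^'n^3"
  assumes "psd P"
  shows "psd (posterior C P)"
proof -
  have "transpose (C ** P ** transpose C) = C ** P ** transpose C"
    using assms by (simp add: psd_def matrix_transpose_mul matrix_mul_assoc)
  then obtain X where "penrose (C ** P ** transpose C) X"
    using penrose_exists_cubic cayley_hamilton_3 by blast
  then show ?thesis
    using assms by (simp add: posterior_eq psd_posterior_penrose)
qed

(* Posterior variance of the first coordinate for prior variance x; all sensor sets of the
   example lead to this form. *)
definition post_var :: "real \<Rightarrow> real \<Rightarrow> real \<Rightarrow> real" where
  "post_var c a x = c * x / (a * x + c)"

definition var_step :: "real \<Rightarrow> real \<Rightarrow> real \<Rightarrow> real \<Rightarrow> real" where
  "var_step l c a x = 1 + l\<^sup>2 * post_var c a x"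

(* Meaningful only under the hypotheses of the context below, where the fixed point is unique. *)
definition stat_var :: "real \<Rightarrow> real \<Rightarrow> real \<Rightarrow> real" where
  "stat_var l c a = (THE x. 1 \<le> x \<and> var_step l c a x = x)"

lemma post_var_less:
  assumes "0 < x" "0 < a1 * x + c1" "0 < a2 * x + c2" "c1 * a2 < c2 * a1"
  shows "post_var c1 a1 x < post_var c2 a2 x"
proof -
  have "c1 * x * (a2 * x + c2) < c2 * x * (a1 * x + c1)"
    using assms mult_strict_right_mono[OF assms(4), of "x * x"] by (simp add: algebra_simps)
  then show ?thesis
    unfolding post_var_def using assms by (simp add: divide_simps)
qed

context
  fixes c a :: real
  assumes c: "0 \<le> c" and a: "0 \<le> a" and ac: "0 < a + c"
begin

lemma post_var_denom_pos: "1 \<le> x \<Longrightarrow> 0 < a * x + c"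
  using a ac mult_left_mono[of 1 x a] by linarith

lemma post_var_nonneg:
  assumes "1 \<le> x"
  shows "0 \<le> post_var c a x"
  unfolding post_var_def using assms c post_var_denom_pos[OF assms] by (simp add: divide_nonneg_pos)

lemma post_var_le: "1 \<le> x \<Longrightarrow> post_var c a x \<le> x"
  unfolding post_var_def using a c post_var_denom_pos[of x]
  by (simp add: divide_le_eq algebra_simps)

lemma post_var_lipschitz:
  assumes "1 \<le> x" "1 \<le> y"
  shows "\<bar>post_var c a x - post_var c a y\<bar> \<le> \<bar>x - y\<bar>"
proof -
  have px: "0 < a * x + c" and py: "0 < a * y + c"
    using assms post_var_denom_pos by auto
  define q where "q = c\<^sup>2 / ((a * x + c) * (a * y + c))"
  have "post_var c a x - post_var c a y = q * (x - y)"
    unfolding post_var_def q_def using px py by (simp add: divide_simps power2_eq_square) (simp add: algebra_simps)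
  moreover have "c\<^sup>2 \<le> (a * x + c) * (a * y + c)"
    using assms a c by (simp add: algebra_simps power2_eq_square)
  then have "0 \<le> q" "q \<le> 1"
    unfolding q_def using px py by simp_all
  ultimately show ?thesis
    by (simp add: abs_mult mult_left_le_one_le)
qed

lemma var_step_ge_1: "1 \<le> x \<Longrightarrow> 1 \<le> var_step l c a x"
  unfolding var_step_def using post_var_nonneg by simp

lemma var_step_contraction:
  assumes "1 \<le> x" "1 \<le> y"
  shows "\<bar>var_step l c a x - var_step l c a y\<bar> \<le> l\<^sup>2 * \<bar>x - y\<bar>"
  unfolding var_step_def using post_var_lipschitz[OF assms]
  by (simp add: abs_mult mult_left_mono flip: right_diff_distrib)

context
  fixes l :: real
  assumes l: "\<bar>l\<bar> < 1"
begin

lemma stat_var_unique: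
  assumes "1 \<le> x" "var_step l c a x = x" "1 \<le> y" "var_step l c a y = y"
  shows "x = y"
proof -
  have "\<bar>x - y\<bar> \<le> l\<^sup>2 * \<bar>x - y\<bar>"
    using var_step_contraction[of x y, where l = l] assms by simp
  then have "(1 - l\<^sup>2) * \<bar>x - y\<bar> \<le> 0"
    by (simp add: algebra_simps)
  then show ?thesis
    using l[folded abs_square_less_1] by (simp add: mult_le_0_iff)
qed

lemma stat_var_fixed: "1 \<le> stat_var l c a \<and> var_step l c a (stat_var l c a) = stat_var l c a"
proof -
  have "\<exists>!x\<in>{1..}. var_step l c a x = x"
  proof (rule Banach_fix[where c = "l\<^sup>2"])
    show "dist (var_step l c a x) (var_step l c a y) \<le> l\<^sup>2 * dist x y" if "x \<in> {1..}" "y \<in> {1..}" for x y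
      using var_step_contraction that by (simp add: dist_real_def)
  qed (use l var_step_ge_1 in \<open>auto simp: complete_eq_closed abs_square_less_1\<close>)
  then have "\<exists>!x. 1 \<le> x \<and> var_step l c a x = x"
    by auto
  then show ?thesis
    unfolding stat_var_def by (rule theI')
qed

lemma stat_var_eqI: "1 \<le> x \<Longrightarrow> var_step l c a x = x \<Longrightarrow> stat_var l c a = x"
  using stat_var_fixed stat_var_unique by blast

lemma stat_var_ge_1: "1 \<le> stat_var l c a"
  using stat_var_fixed by blast

lemma var_step_iterates_tendsto:
  assumes u0: "1 \<le> u 0" and u_Suc: "\<And>k. u (Suc k) = var_step l c a (u k)"
  shows "u \<longlonglongrightarrow> stat_var l c a"
proof -
  let ?p = "stat_var l c a"
  have ge: "1 \<le> u k" for k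
    by (induction k) (use u0 u_Suc var_step_ge_1 in auto)
  have bound: "\<bar>u k - ?p\<bar> \<le> (l\<^sup>2) ^ k * \<bar>u 0 - ?p\<bar>" for k
  proof (induction k)
    case (Suc k)
    have "\<bar>u (Suc k) - ?p\<bar> \<le> l\<^sup>2 * \<bar>u k - ?p\<bar>"
      using var_step_contraction[OF ge] stat_var_fixed u_Suc by metis
    also have "\<dots> \<le> l\<^sup>2 * ((l\<^sup>2) ^ k * \<bar>u 0 - ?p\<bar>)"
      using Suc by (simp add: mult_left_mono)
    finally show ?case by simp
  qed simp
  have "(\<lambda>k. (l\<^sup>2) ^ k * \<bar>u 0 - ?p\<bar>) \<longlonglongrightarrow> 0"
    using l by (intro tendsto_mult_left_zero LIMSEQ_power_zero) (simp add: abs_square_less_1)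
  then have "(\<lambda>k. u k - ?p) \<longlonglongrightarrow> 0"
    by (rule Lim_null_comparison[rotated]) (simp add: bound)
  then show ?thesis
    by (simp add: Lim_null[symmetric])
qed

end

end

lemma stat_var_strict_mono:
  assumes l: "\<bar>l\<bar> < 1" "l \<noteq> 0"
    and ok1: "0 \<le> c1" "0 \<le> a1" "0 < a1 + c1" and ok2: "0 \<le> c2" "0 \<le> a2" "0 < a2 + c2"
    and less: "\<And>x. 1 \<le> x \<Longrightarrow> post_var c1 a1 x < post_var c2 a2 x"
  shows "stat_var l c1 a1 < stat_var l c2 a2"
proof (rule ccontr)
  let ?s = "stat_var l c1 a1" and ?b = "stat_var l c2 a2"
  assume "\<not> ?s < ?b"
  then have le: "?b \<le> ?s" by simp
  have s: "1 \<le> ?s" "var_step l c1 a1 ?s = ?s" and b: "1 \<le> ?b" "var_step l c2 a2 ?b = ?b"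
    using stat_var_fixed[OF ok1 l(1)] stat_var_fixed[OF ok2 l(1)] by auto
  have "l\<^sup>2 * post_var c1 a1 ?s < l\<^sup>2 * post_var c2 a2 ?s"
    using less[OF s(1)] l(2) by simp
  then have "?s < var_step l c2 a2 ?s"
    using s(2) unfolding var_step_def by simp
  then have "?s - ?b < var_step l c2 a2 ?s - var_step l c2 a2 ?b"
    using b by simp
  also have "\<dots> \<le> l\<^sup>2 * (?s - ?b)"
    using var_step_contraction[OF ok2 s(1) b(1), where l = l] le by simp
  also have "\<dots> \<le> ?s - ?b"
    using le l(1)[folded abs_square_less_1] by (intro mult_left_le_one_le) auto
  finally show False by simp
qed

lemma stat_var_no_gain: "\<bar>l\<bar> < 1 \<Longrightarrow> stat_var l 0 1 = 1"
  by (rule stat_var_eqI) (auto simp: var_step_def post_var_def)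

lemma stat_var_comparisons:
  assumes l: "0 < \<bar>l\<bar>" "\<bar>l\<bar> < 1" and k: "0 < k"
  shows "stat_var l k 1 < stat_var l (2 * k) 1" and "stat_var l k 1 < stat_var l 1 0"
    and "stat_var l k 2 < stat_var l k 1"
  using l k by (auto intro!: stat_var_strict_mono post_var_less)

lemma stat_var_bounds:
  assumes l: "\<bar>l\<bar> < 1" and a: "0 \<le> a" and k: "0 < k"
  defines "D \<equiv> 1 / (1 - l\<^sup>2)"
  shows "D - a * l\<^sup>2 * D ^ 3 / k \<le> stat_var l k a" and "stat_var l k a \<le> D"
proof -
  let ?p = "stat_var l k a"
  have ok: "0 \<le> k" "0 < a + k"
    using a k by auto
  have p: "1 \<le> ?p" and fixed: "?p = 1 + l\<^sup>2 * post_var k a ?p"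
    using stat_var_fixed[OF ok(1) a ok(2) l] unfolding var_step_def by auto
  have l2: "0 < 1 - l\<^sup>2"
    using l by (simp add: abs_square_less_1)
  have "l\<^sup>2 * post_var k a ?p \<le> l\<^sup>2 * ?p"
    using post_var_le[OF ok(1) a ok(2) p] by (simp add: mult_left_mono)
  then have "(1 - l\<^sup>2) * ?p \<le> 1"
    using fixed by (simp add: algebra_simps)
  then show upper: "?p \<le> D"
    unfolding D_def using l2 by (simp add: pos_le_divide_eq mult.commute)
  have den: "0 < a * ?p + k"
    using post_var_denom_pos[OF ok(1) a ok(2) p] .
  have "post_var k a ?p = ?p - a * ?p\<^sup>2 / (a * ?p + k)"
    unfolding post_var_def using den by (simp add: field_simps power2_eq_square)
  also have "\<dots> \<ge> ?p - a * D\<^sup>2 / k"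
  proof -
    have "a * ?p\<^sup>2 / (a * ?p + k) \<le> a * ?p\<^sup>2 / k"
      using a k den p by (intro divide_left_mono) auto
    also have "\<dots> \<le> a * D\<^sup>2 / k"
      using a k p upper by (intro divide_right_mono mult_left_mono power_mono) auto
    finally show ?thesis by simp
  qed
  finally have "l\<^sup>2 * (?p - a * D\<^sup>2 / k) \<le> l\<^sup>2 * post_var k a ?p"
    by (simp add: mult_left_mono)
  then have "(1 - l\<^sup>2) * ?p \<ge> 1 - l\<^sup>2 * (a * D\<^sup>2 / k)"
    using fixed by (simp add: algebra_simps)
  then have "?p \<ge> D * (1 - l\<^sup>2 * (a * D\<^sup>2 / k))"
    unfolding D_def using l2 by (simp add: field_simps)
  moreover have "D * (1 - l\<^sup>2 * (a * D\<^sup>2 / k)) = D - a * l\<^sup>2 * D ^ 3 / k"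
    by (simp add: algebra_simps power2_eq_square power3_eq_cube)
  ultimately show "D - a * l\<^sup>2 * D ^ 3 / k \<le> ?p" by simp
qed

lemma stat_var_tendsto_at_top:
  assumes "\<bar>l\<bar> < 1" "0 \<le> a"
  shows "((\<lambda>k. stat_var l k a) \<longlongrightarrow> 1 / (1 - l\<^sup>2)) at_top"
proof -
  define D where "D = 1 / (1 - l\<^sup>2)"
  note bounds = stat_var_bounds[OF assms, folded D_def]
  have "filterlim (\<lambda>k::real. k) at_infinity at_top"
    by (rule filterlim_at_top_imp_at_infinity[OF filterlim_ident])
  then have "((\<lambda>k. a * l\<^sup>2 * D ^ 3 / k) \<longlongrightarrow> 0) at_top"
    by (rule tendsto_divide_0[OF tendsto_const])
  then have lower: "((\<lambda>k. D - a * l\<^sup>2 * D ^ 3 / k) \<longlongrightarrow> D) at_top"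
    using tendsto_diff[OF tendsto_const, of _ 0 at_top D] by simp
  have "eventually (\<lambda>k. D - a * l\<^sup>2 * D ^ 3 / k \<le> stat_var l k a) at_top"
    using eventually_gt_at_top[of 0] by (rule eventually_mono) (rule bounds(1))
  moreover have "eventually (\<lambda>k. stat_var l k a \<le> D) at_top"
    using eventually_gt_at_top[of 0] by (rule eventually_mono) (rule bounds(2))
  ultimately show ?thesis
    unfolding D_def[symmetric] using lower tendsto_const by (rule tendsto_sandwich)
qed

definition diag_first :: "real \<Rightarrow> real^3^3" where
  "diag_first d = (\<chi> i j. if i = j then (if i = 1 then d else 1) else 0)"

lemma trace_diag_first: "trace (diag_first d) = d + 2"
  by (simp add: trace_def sum_3 diag_first_def)

lemma riccati_Aex:
  "riccati (Aex l) (mat 1) C P = diag_first (1 + l\<^sup>2 * posterior C P $ 1 $ 1)"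
proof -
  have "Aex l ** X ** transpose (Aex l) = (\<chi> i j. if i = 1 \<and> j = 1 then l\<^sup>2 * X $ 1 $ 1 else 0)" for X
    by (simp add: vec_eq_iff forall_3 matrix_matrix_mult_def sum_3 Aex_def transpose_def power2_eq_square)
  then show ?thesis
    by (simp add: riccati_eq_posterior vec_eq_iff forall_3 diag_first_def mat_def)
qed

lemmas Csel_simps = Csel_def Cfull_def penrose_def vec_eq_iff forall_3 matrix_matrix_mult_def sum_3
  diag_first_def transpose_def

lemma posterior_Csel_empty: "posterior (Csel h {}) (diag_first d) $ 1 $ 1 = post_var 1 0 d"
proof -
  have W: "penrose (Csel h {} ** diag_first d ** transpose (Csel h {})) 0"
    by (simp add: Csel_simps)
  show ?thesis unfolding posterior_eq[OF W]
    by (simp add: Csel_simps post_var_def)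
qed

lemma posterior_Csel_3: "posterior (Csel h {3}) (diag_first d) $ 1 $ 1 = post_var 1 0 d"
proof -
  have W: "penrose (Csel h {3} ** diag_first d ** transpose (Csel h {3}))
      (\<chi> i j. if i = 3 \<and> j = 3 then 1/2 else 0)"
    by (simp add: Csel_simps)
  show ?thesis unfolding posterior_eq[OF W]
    by (simp add: Csel_simps post_var_def)
qed

lemma posterior_Csel_1:
  assumes "1 \<le> d"
  shows "posterior (Csel h {1}) (diag_first d) $ 1 $ 1 = post_var (2 * h\<^sup>2) 1 d"
proof -
  define e where "e = d + 2 * (h * h)"
  have e: "e \<noteq> 0"
    unfolding e_def using assms by (smt (verit) zero_le_square)
  have W: "penrose (Csel h {1} ** diag_first d ** transpose (Csel h {1}))
      (\<chi> i j. if i = 1 \<and> j = 1 then 1/e else 0)"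
    using e by (simp add: Csel_simps field_simps; simp add: e_def algebra_simps power2_eq_square; algebra)
  show ?thesis unfolding posterior_eq[OF W]
    using e by (simp add: Csel_simps post_var_def field_simps;
        simp add: e_def algebra_simps power2_eq_square; simp add: field_simps)
qed

lemma posterior_Csel_2:
  assumes "1 \<le> d"
  shows "posterior (Csel h {2}) (diag_first d) $ 1 $ 1 = post_var (h\<^sup>2) 1 d"
proof -
  define e where "e = d + h * h"
  have e: "e \<noteq> 0"
    unfolding e_def using assms by (smt (verit) zero_le_square)
  have W: "penrose (Csel h {2} ** diag_first d ** transpose (Csel h {2}))
      (\<chi> i j. if i = 2 \<and> j = 2 then 1/e else 0)"
    using e by (simp add: Csel_simps field_simps; simp add: e_def algebra_simps power2_eq_square; algebra)
  show ?thesis unfolding posterior_eq[OF W]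
    using e by (simp add: Csel_simps post_var_def field_simps;
        simp add: e_def algebra_simps power2_eq_square; simp add: field_simps)
qed

lemma posterior_Csel_12:
  assumes "0 < h" "1 \<le> d"
  shows "posterior (Csel h {1,2}) (diag_first d) $ 1 $ 1 = post_var (h\<^sup>2) 1 d"
proof -
  define e where "e = d + h * h"
  have e: "e \<noteq> 0"
    unfolding e_def using assms by (smt (verit) zero_le_square)
  have h: "h \<noteq> 0"
    using assms by simp
  have W: "penrose (Csel h {1,2} ** diag_first d ** transpose (Csel h {1,2}))
      (\<chi> i j. if i = 1 \<and> j = 1 then 1/(h*h) else if i = 1 \<and> j = 2 then -1/(h*h)
         else if i = 2 \<and> j = 1 then -1/(h*h) else if i = 2 \<and> j = 2 then 1/(h*h) + 1/e else 0)"
    using e h by (simp add: Csel_simps field_simps; simp add: e_def algebra_simps; algebra)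
  show ?thesis unfolding posterior_eq[OF W]
    using e h by (simp add: Csel_simps post_var_def field_simps;
        simp add: e_def algebra_simps power2_eq_square; simp add: field_simps)
qed

lemma posterior_Csel_13:
  assumes "1 \<le> d"
  shows "posterior (Csel h {1,3}) (diag_first d) $ 1 $ 1 = post_var 0 1 d"
proof -
  have W: "penrose (Csel h {1,3} ** diag_first d ** transpose (Csel h {1,3}))
      (\<chi> i j. if i = 1 \<and> j = 1 then 1/d else if i = 1 \<and> j = 3 then -h/d
         else if i = 3 \<and> j = 1 then -h/d else if i = 3 \<and> j = 3 then (d + 2*(h*h))/(2*d) else 0)"
    using assms by (simp add: Csel_simps field_simps power2_eq_square)
  show ?thesis unfolding posterior_eq[OF W]
    using assms by (simp add: Csel_simps post_var_def field_simps power2_eq_square)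
qed

lemma posterior_Csel_23:
  assumes "1 \<le> d"
  shows "posterior (Csel h {2,3}) (diag_first d) $ 1 $ 1 = post_var (h\<^sup>2) 2 d"
proof -
  define e where "e = 2 * d + h * h"
  have e: "e \<noteq> 0"
    unfolding e_def using assms by (smt (verit) zero_le_square)
  have W: "penrose (Csel h {2,3} ** diag_first d ** transpose (Csel h {2,3}))
      (\<chi> i j. if i = 2 \<and> j = 2 then 2/e else if i = 2 \<and> j = 3 then -h/e
         else if i = 3 \<and> j = 2 then -h/e else if i = 3 \<and> j = 3 then (d + h*h)/e else 0)"
    using e by (simp add: Csel_simps field_simps; simp add: e_def algebra_simps power2_eq_square; algebra)
  show ?thesis unfolding posterior_eq[OF W]
    using e by (simp add: Csel_simps post_var_def field_simps;
        simp add: e_def algebra_simps power2_eq_square; simp add: field_simps)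
qed

lemma kf_cov_Aex:
  fixes C :: "real^3^3"
  assumes "psd P0"
  obtains u where "1 \<le> u 0"
    and "\<And>k. u (Suc k) = 1 + l\<^sup>2 * posterior C (diag_first (u k)) $ 1 $ 1"
    and "\<And>k. kf_cov (Aex l) (mat 1) C P0 (Suc k) = diag_first (u k)"
proof
  define u where "u k = 1 + l\<^sup>2 * posterior C (kf_cov (Aex l) (mat 1) C P0 k) $ 1 $ 1" for k
  show cov: "kf_cov (Aex l) (mat 1) C P0 (Suc k) = diag_first (u k)" for k
    by (simp add: u_def riccati_Aex)
  show "u (Suc k) = 1 + l\<^sup>2 * posterior C (diag_first (u k)) $ 1 $ 1" for k
    by (simp only: u_def[of "Suc k"] cov)
  show "1 \<le> u 0"
    using psd_diag_nonneg[OF psd_posterior[OF assms]] by (simp add: u_def)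
qed

lemma tendsto_diag_first:
  assumes "u \<longlonglongrightarrow> x"
  shows "(\<lambda>k. diag_first (u k)) \<longlonglongrightarrow> diag_first x"
proof -
  have "diag_first v = mat 1 + (v - 1) *\<^sub>R (\<chi> i j. if i = 1 \<and> j = 1 then 1 else 0)" for v
    by (simp add: vec_eq_iff forall_3 diag_first_def mat_def)
  then show ?thesis
    using assms by (simp only:) (intro tendsto_intros)
qed

lemma kf_lim_Aex:
  fixes C :: "real^3^3"
  assumes l: "\<bar>l\<bar> < 1" and ok: "0 \<le> c" "0 \<le> a" "0 < a + c"
    and post: "\<And>d. 1 \<le> d \<Longrightarrow> posterior C (diag_first d) $ 1 $ 1 = post_var c a d"
  shows "kf_lim (Aex l) (mat 1) C = diag_first (stat_var l c a)"
proof -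
  have conv: "kf_cov (Aex l) (mat 1) C P0 \<longlonglongrightarrow> diag_first (stat_var l c a)" if P0: "psd P0" for P0
  proof -
    obtain u where u0: "1 \<le> u 0"
      and u_Suc: "\<And>k. u (Suc k) = 1 + l\<^sup>2 * posterior C (diag_first (u k)) $ 1 $ 1"
      and cov: "\<And>k. kf_cov (Aex l) (mat 1) C P0 (Suc k) = diag_first (u k)"
      using kf_cov_Aex[OF P0] by blast
    have ge: "1 \<le> u k" for k
      by (induction k) (use u0 u_Suc post var_step_ge_1[OF ok] in \<open>auto simp: var_step_def\<close>)
    have "u (Suc k) = var_step l c a (u k)" for k
      using u_Suc post[OF ge] by (simp add: var_step_def)
    then have "u \<longlonglongrightarrow> stat_var l c a"
      by (rule var_step_iterates_tendsto[of c a l u, OF ok l u0])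
    then have "(\<lambda>k. kf_cov (Aex l) (mat 1) C P0 (Suc k)) \<longlonglongrightarrow> diag_first (stat_var l c a)"
      unfolding cov by (rule tendsto_diag_first)
    then show ?thesis
      by (simp only: filterlim_sequentially_Suc)
  qed
  show ?thesis
    unfolding kf_lim_def
  proof (rule the_equality)
    fix L
    assume "\<forall>P0. psd P0 \<longrightarrow> kf_cov (Aex l) (mat 1) C P0 \<longlonglongrightarrow> L"
    then show "L = diag_first (stat_var l c a)"
      using conv psd_0 LIMSEQ_unique by blast
  qed (use conv in blast)
qed

lemma Sig_eq:
  assumes l: "\<bar>l\<bar> < 1" and h: "0 < h"
  shows "Sig l h {} = diag_first (stat_var l 1 0)"
    and "Sig l h {3} = diag_first (stat_var l 1 0)"
    and "Sig l h {1} = diag_first (stat_var l (2 * h\<^sup>2) 1)"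
    and "Sig l h {2} = diag_first (stat_var l (h\<^sup>2) 1)"
    and "Sig l h {1,2} = diag_first (stat_var l (h\<^sup>2) 1)"
    and "Sig l h {1,3} = diag_first (stat_var l 0 1)"
    and "Sig l h {2,3} = diag_first (stat_var l (h\<^sup>2) 2)"
  unfolding Sig_def using h
  by (auto intro!: kf_lim_Aex[OF l] simp: posterior_Csel_empty posterior_Csel_3 posterior_Csel_1
      posterior_Csel_2 posterior_Csel_12 posterior_Csel_13 posterior_Csel_23 add_pos_nonneg)

lemma UNIV_3: "(UNIV :: 3 set) = {1, 2, 3}"
  using exhaust_3 by auto

lemma subsets_3: "(S::3 set) \<in> {{}, {1}, {2}, {3}, {1,2}, {1,3}, {2,3}, UNIV}"
proof -
  have "S \<in> Pow {1, 2, 3}"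
    by (simp flip: UNIV_3)
  then show ?thesis
    by (simp add: Pow_insert UNIV_3 insert_commute)
qed

lemma greedy_res_2:
  assumes "greedy_res f 2 T"
  obtains j0 j where "T = {j0, j}" "j \<noteq> j0" "\<And>j'. f {j0} \<le> f {j'}"
    "\<And>j'. j' \<noteq> j0 \<Longrightarrow> f {j0, j} \<le> f {j0, j'}"
proof -
  from assms obtain S j where T: "T = insert j S" and S: "greedy_res f (Suc 0) S" and j: "j \<notin> S"
    and min_j: "\<forall>j'. j' \<notin> S \<longrightarrow> f (insert j S) \<le> f (insert j' S)"
    by (cases rule: greedy_res.cases) (auto simp: numeral_2_eq_2)
  from S obtain S0 j0 where S_eq: "S = insert j0 S0" and S0: "greedy_res f 0 S0"
    and min_j0: "\<forall>j'. j' \<notin> S0 \<longrightarrow> f (insert j0 S0) \<le> f (insert j' S0)"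
    by (cases rule: greedy_res.cases) auto
  from S0 have "S0 = {}"
    by (cases rule: greedy_res.cases) auto
  with S_eq have S_eq: "S = {j0}" by simp
  show ?thesis
  proof (rule that)
    show "T = {j0, j}" "j \<noteq> j0" "f {j0} \<le> f {j'}" for j'
      using T j min_j0 S_eq \<open>S0 = {}\<close> by auto
    show "f {j0, j} \<le> f {j0, j'}" if "j' \<noteq> j0" for j'
      using min_j that S_eq by (simp add: insert_commute)
  qed
qed

lemma greedy_selection:
  assumes l: "0 < \<bar>l\<bar>" "\<bar>l\<bar> < 1" and h: "0 < h"
    and greedy: "greedy_res (\<lambda>S. trace (Sig l h S)) 2 T"
  shows "T = {2, 3}"
proof -
  let ?f = "\<lambda>S. trace (Sig l h S)"
  have "?f {2} < ?f {1}" "?f {2} < ?f {3}" "?f {2, 3} < ?f {2, 1}"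
    using stat_var_comparisons[OF l, of "h\<^sup>2"] h
    by (simp_all add: Sig_eq[OF l(2) h] trace_diag_first insert_commute)
  obtain j0 j where T: "T = {j0, j}" and "j \<noteq> j0" and first: "\<And>j'. ?f {j0} \<le> ?f {j'}"
    and second: "\<And>j'. j' \<noteq> j0 \<Longrightarrow> ?f {j0, j} \<le> ?f {j0, j'}"
    using greedy_res_2[OF greedy] by blast
  have "j0 = 2"
    using first[of 2] \<open>?f {2} < ?f {1}\<close> \<open>?f {2} < ?f {3}\<close> exhaust_3[of j0] by auto
  moreover have "j = 3"
    using second[of 3] \<open>?f {2, 3} < ?f {2, 1}\<close> exhaust_3[of j] \<open>j \<noteq> j0\<close> \<open>j0 = 2\<close> by auto
  ultimately show ?thesis
    using T by simp
qed

lemma Min_trace_Sig: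
  assumes l: "\<bar>l\<bar> < 1" and h: "0 < h"
  shows "Min {trace (Sig l h S) | S. card S \<le> 2} = 3"
proof (rule Min_eqI)
  have "{trace (Sig l h S) | S. card S \<le> 2} = (\<lambda>S. trace (Sig l h S)) ` {S. card S \<le> 2}"
    by auto
  then show "finite {trace (Sig l h S) | S. card S \<le> 2}"
    by simp
  have "3 = trace (Sig l h {1, 3})" "card {1, 3 :: 3} \<le> 2"
    by (simp_all add: Sig_eq[OF l h] stat_var_no_gain[OF l] trace_diag_first)
  then show "3 \<in> {trace (Sig l h S) | S. card S \<le> 2}"
    by blast
  fix y
  assume "y \<in> {trace (Sig l h S) | S. card S \<le> 2}"
  then obtain S where y: "y = trace (Sig l h S)" and "card S \<le> 2"
    by blast
  then have "S \<noteq> UNIV"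
    by auto
  have "1 \<le> stat_var l k 1" "1 \<le> stat_var l (2 * k) 1" "1 \<le> stat_var l k 2" if "0 \<le> k" for k
    using that l by (auto intro!: stat_var_ge_1)
  moreover have "1 \<le> stat_var l 1 0" "1 \<le> stat_var l 0 1"
    using l by (auto intro!: stat_var_ge_1)
  ultimately show "3 \<le> y"
    using subsets_3[of S] \<open>S \<noteq> UNIV\<close> unfolding y by (auto simp: Sig_eq[OF l h] trace_diag_first)
qed

lemma greedy_ratio_eq:
  assumes "0 < \<bar>l\<bar>" "\<bar>l\<bar> < 1" "0 < h" "greedy_res (\<lambda>S. trace (Sig l h S)) 2 T"
  shows "trace (Sig l h T) / Min {trace (Sig l h S) | S. card S \<le> 2} = (stat_var l (h\<^sup>2) 2 + 2) / 3"
  using greedy_selection[OF assms]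
  by (simp add: Sig_eq[OF assms(2,3)] trace_diag_first Min_trace_Sig[OF assms(2,3)])

theorem theorem3:
  fixes l1 :: real and g :: "real \<Rightarrow> 3 set"
  assumes "0 < \<bar>l1\<bar>" and "\<bar>l1\<bar> < 1"
    and "\<forall>h>0. greedy_res (\<lambda>S. trace (Sig l1 h S)) 2 (g h)"
  shows "((\<lambda>h. trace (Sig l1 h (g h)) / Min {trace (Sig l1 h S) | S. card S \<le> 2})
           \<longlongrightarrow> 2/3 + 1 / (3 * (1 - l1^2))) at_top"
proof -
  have "((\<lambda>k. stat_var l1 k 2) \<longlongrightarrow> 1 / (1 - l1\<^sup>2)) at_top"
    by (rule stat_var_tendsto_at_top[OF assms(2)]) simp
  moreover have "filterlim (\<lambda>h::real. h\<^sup>2) at_top at_top"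
    by (intro filterlim_pow_at_top filterlim_ident) simp
  ultimately have "((\<lambda>h. stat_var l1 (h\<^sup>2) 2) \<longlongrightarrow> 1 / (1 - l1\<^sup>2)) at_top"
    by (rule filterlim_compose)
  then have "((\<lambda>h. (stat_var l1 (h\<^sup>2) 2 + 2) / 3) \<longlongrightarrow> (1 / (1 - l1\<^sup>2) + 2) / 3) at_top"
    by (intro tendsto_divide tendsto_add tendsto_const) simp_all
  moreover have "(1 / (1 - l1\<^sup>2) + 2) / 3 = 2/3 + 1 / (3 * (1 - l1^2))"
    using assms(2)[folded abs_square_less_1] by (simp add: field_simps)
  ultimately have lim: "((\<lambda>h. (stat_var l1 (h\<^sup>2) 2 + 2) / 3) \<longlongrightarrow> 2/3 + 1 / (3 * (1 - l1^2))) at_top"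
    by simp
  have "eventually (\<lambda>h. trace (Sig l1 h (g h)) / Min {trace (Sig l1 h S) | S. card S \<le> 2}
      = (stat_var l1 (h\<^sup>2) 2 + 2) / 3) at_top"
    using eventually_gt_at_top[of 0] by (rule eventually_mono) (use greedy_ratio_eq assms in auto)
  from tendsto_cong[OF this] lim show ?thesis
    by simp
qed

end
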